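(* Let $p\in(0,1)$ and let $\eta,c$ be positive numbers with $\eta\ge 4e^p/p$ and $c\le p\eta$. Then $$-c\,\Upsilon(1/c)+c\log f(2-\eta/c)<\max\{\eta(1-p)\log(1-p^3),\,-0.15p\eta\}-1.$$
   Context: $\Upsilon:(0,\infty)\to\mathbb{R}$ is defined by $\Upsilon(x)=x-1-\log x$ for $0<x\le1$ and $\Upsilon(x)=0$ for $x>1$. $f:(-\infty,1]\to\mathbb{R}$ is defined by $f(x)=(2-x)^{2-x}p(1-p)^{1-x}(1-x)^{x-1}$, with the convention $0^0=1$. $\log$ is natural. *)

theory Defs
  imports Complex_Main
begin

definition Upsilon :: "real \<Rightarrow> real" where
  "Upsilon x = (if x \<le> 1 then x - 1 - ln x else 0)"

text \<open>f_p(x) = (2-x)^(2-x) p (1-p)^(1-x) (1-x)^(x-1) for x <= 1, with 0^0 = 1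
  (the convention is only needed for the last factor at x = 1).\<close>
definition f :: "real \<Rightarrow> real \<Rightarrow> real" where
  "f p x = (2 - x) powr (2 - x) * p * (1 - p) powr (1 - x)
            * (if x = 1 then 1 else (1 - x) powr (x - 1))"

end

theory Submission
  imports Defs
begin

text \<open>Expanding \<open>f\<close>, the left-hand side is an explicit function of \<open>c\<close> whose only
  troublesome term is \<open>-(\<eta> - c) ln (\<eta> - c)\<close>. Bounding \<open>x ln x\<close> from below by its tangent
  at \<open>x = \<eta> s\<close> decouples \<open>c\<close> from \<open>\<eta>\<close>, and the remaining function of \<open>c\<close> is maximal at
  \<open>c = sqrt K\<close> with \<open>K = p \<eta> s / (1 - p)\<close>. For \<open>p \<ge> 1/3\<close> the tangent point \<open>s = 1 - p\<close>
  gives the bound \<open>2 sqrt L - L - 1\<close> with \<open>L = p \<eta> \<ge> 4 exp p > 5.54\<close>, which is below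
  \<open>-0.15 L - 1\<close>. For \<open>p < 1/3\<close> the tangent point \<open>s = 1\<close> leaves \<open>2 sqrt K - 1 + \<eta> ln (1 - p)\<close>,
  and the gap to \<open>\<eta> (1 - p) ln (1 - p^3)\<close> is estimated from below by \<open>ln (1 + z) \<ge> 2z/(2 + z)\<close>
  and polynomial inequalities.\<close>

lemma ln_one_plus_ge_rational:
  fixes z :: real
  assumes "0 \<le> z"
  shows "2 * z / (2 + z) \<le> ln (1 + z)"
proof -
  let ?g = "\<lambda>z::real. ln (1 + z) - 2 * z / (2 + z)"
  have deriv: "(?g has_real_derivative (1 / (1 + y) - 4 / (2 + y)^2)) (at y)" if "0 \<le> y" for y
    using that by (auto intro!: derivative_eq_intros simp: field_simps power2_eq_square)
  have deriv_nonneg: "0 \<le> 1 / (1 + y) - 4 / (2 + y)^2" if "0 \<le> y" for y :: real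
  proof -
    have "4 * (1 + y) \<le> (2 + y)^2" by (simp add: power2_eq_square algebra_simps)
    then show ?thesis using that by (simp add: field_simps)
  qed
  have "?g 0 \<le> ?g z"
    using assms deriv deriv_nonneg by (intro DERIV_nonneg_imp_nondecreasing[of 0 z ?g]) blast+
  then show ?thesis by simp
qed

lemma two_div_le_neg_ln_one_minus:
  fixes p :: real
  assumes "0 \<le> p" "p < 1"
  shows "2 * p / (2 - p) \<le> - ln (1 - p)"
proof -
  have "2 * (p / (1 - p)) / (2 + p / (1 - p)) \<le> ln (1 + p / (1 - p))"
    using assms by (intro ln_one_plus_ge_rational) simp
  moreover have "2 * (p / (1 - p)) / (2 + p / (1 - p)) = 2 * p / (2 - p)"
    using assms by (simp add: divide_simps)
  moreover have "ln (1 + p / (1 - p)) = - ln (1 - p)"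
    using assms by (simp add: field_simps ln_div)
  ultimately show ?thesis by linarith
qed

lemma mult_ln_tangent:
  fixes u v :: real
  assumes "0 < u" "0 < v"
  shows "u * ln v + u - v \<le> u * ln u"
proof -
  have "u * (ln v - ln u) \<le> u * ((v - u) / u)"
    using assms ln_diff_le[of v u] by (intro mult_left_mono) auto
  also have "\<dots> = v - u" using assms by simp
  finally show ?thesis by (simp add: algebra_simps)
qed

lemma two_sqrt_less_mult:
  fixes a x :: real
  assumes "0 < a" "0 < x" "4 < a^2 * x"
  shows "2 * sqrt x < a * x"
proof -
  have "4 * x < (a * x)^2"
    using assms by (simp add: power2_eq_square mult.assoc)
  then have "sqrt (4 * x) < sqrt ((a * x)^2)" by (simp only: real_sqrt_less_iff)
  then show ?thesis using assms by (simp add: real_sqrt_mult)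
qed

lemma poly_le_rational_sum:
  fixes p :: real
  assumes "0 < p" "p \<le> 1/3"
  shows "1 + p/2 - p^2 \<le> 2*p / (2 - p) + 2*(1 - p^2) / (2 + p + p^2)"
proof -
  have pos: "0 < 2 - p" "0 < 2 + p + p^2" using assms by (auto intro: add_pos_nonneg)
  have "2*p*(2 + p + p^2) + 2*(1 - p^2)*(2 - p) - (1 + p/2 - p^2) * ((2 - p) * (2 + p + p^2))
      = p^2 + 9/2*p^3 + 3/2*p^4 - p^5"
    by (simp add: eval_nat_numeral field_simps)
  moreover have "p^5 \<le> p^4" using assms by (intro power_decreasing) auto
  moreover have "0 \<le> p^2" "0 \<le> p^3" "0 \<le> p^4" using assms by auto
  ultimately have "(1 + p/2 - p^2) * ((2 - p) * (2 + p + p^2)) \<le> 2*p*(2 + p + p^2) + 2*(1 - p^2)*(2 - p)"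
    by linarith
  moreover have "2*p / (2 - p) + 2*(1 - p^2) / (2 + p + p^2)
      = (2*p*(2 + p + p^2) + 2*(1 - p^2)*(2 - p)) / ((2 - p) * (2 + p + p^2))"
    using pos by (simp add: field_simps)
  ultimately show ?thesis using pos by (simp add: pos_le_divide_eq)
qed

lemma one_less_poly_product:
  fixes p :: real
  assumes "0 < p" "p \<le> 1/3"
  shows "1 < (1 + p/2 - p^2)^2 * (1 - p) * (1 + p + p^2/2)"
proof -
  have expand: "(1 + p/2 - p^2)^2 * (1 - p) * (1 + p + p^2/2) - 1
     = p * (1 - 9/4*p - 2*p^2 + 11/8*p^3 + 11/8*p^4 - p^6/2)"
    by (simp add: eval_nat_numeral field_simps)
  have "p^6 \<le> p^4" using assms by (intro power_decreasing) auto
  moreover have "p^2 \<le> 1/9" using assms power_mono[of p "1/3" 2] by (simp add: power2_eq_square)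
  moreover have "0 \<le> p^3" "0 \<le> p^4" using assms by auto
  ultimately have "0 < p * (1 - 9/4*p - 2*p^2 + 11/8*p^3 + 11/8*p^4 - p^6/2)"
    using assms by (intro mult_pos_pos) linarith+
  with expand show ?thesis by linarith
qed

lemma poly_le_ln_one_minus_cube_gap:
  fixes p :: real
  assumes "0 < p" "p \<le> 1/3"
  shows "p * (1 + p/2 - p^2) \<le> (1 - p) * ln (1 - p^3) - ln (1 - p)"
proof -
  have "1 - p^3 = (1 - p) * (1 + (p + p^2))"
    by (simp add: algebra_simps power2_eq_square power3_eq_cube)
  moreover have "0 < 1 + (p + p^2)" using assms by (simp add: add_pos_nonneg)
  ultimately have "ln (1 - p^3) = ln (1 - p) + ln (1 + (p + p^2))"
    using assms by (simp add: ln_mult)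
  then have "(1 - p) * ln (1 - p^3) - ln (1 - p) = p * (- ln (1 - p)) + (1 - p) * ln (1 + (p + p^2))"
    by (simp add: algebra_simps)
  moreover have "p * (2*p / (2 - p)) \<le> p * (- ln (1 - p))"
    using assms two_div_le_neg_ln_one_minus[of p] by (intro mult_left_mono) auto
  moreover have "(1 - p) * (2*(p + p^2) / (2 + (p + p^2))) \<le> (1 - p) * ln (1 + (p + p^2))"
    using assms ln_one_plus_ge_rational[of "p + p^2"] by (intro mult_left_mono) auto
  moreover have "(1 - p) * (2*(p + p^2) / (2 + (p + p^2))) = p * (2*(1 - p^2) / (2 + p + p^2))"
    by (simp add: field_simps power2_eq_square)
  moreover have "p * (1 + p/2 - p^2) \<le> p * (2*p / (2 - p) + 2*(1 - p^2) / (2 + p + p^2))"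
    using assms poly_le_rational_sum by (intro mult_left_mono) auto
  ultimately show ?thesis by (simp add: distrib_left)
qed

lemma neg_mult_Upsilon_inverse:
  fixes c :: real
  assumes "0 < c"
  shows "- c * Upsilon (1 / c) = (if 1 \<le> c then c - 1 - c * ln c else 0)"
  using assms by (auto simp: Upsilon_def ln_div field_simps)

lemma Upsilon_entropy_le_two_sqrt:
  fixes K c :: real
  assumes "1 \<le> K" "0 < c"
  shows "- c * Upsilon (1 / c) + c * (1 + ln K - ln c) \<le> 2 * sqrt K - 1"
proof -
  have K: "0 < sqrt K" "ln K = 2 * ln (sqrt K)"
    using assms by (auto simp: ln_sqrt)
  show ?thesis
  proof (cases "1 \<le> c")
    case True
    have "c * (ln (sqrt K) - ln c) \<le> c * ((sqrt K - c) / c)"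
      using K assms ln_diff_le[of "sqrt K" c] by (intro mult_left_mono) auto
    also have "\<dots> = sqrt K - c" using assms by simp
    finally show ?thesis
      unfolding neg_mult_Upsilon_inverse[OF assms(2)] using True K by (simp add: algebra_simps)
  next
    case False
    have "c * (ln 1 - ln c) \<le> c * ((1 - c) / c)"
      using assms ln_diff_le[of 1 c] by (intro mult_left_mono) auto
    also have "\<dots> = 1 - c" using assms by simp
    finally have "- c * ln c \<le> 1 - c" by simp
    moreover have "c * ln K \<le> ln K"
      using False assms mult_right_mono[of c 1 "ln K"] by simp
    moreover have "ln (sqrt K) \<le> sqrt K - 1"
      using K ln_le_minus_one by blast
    ultimately show ?thesis
      unfolding neg_mult_Upsilon_inverse[OF assms(2)] using False K by (simp add: algebra_simps)
  qed
qed

lemma mult_ln_f_eq: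
  fixes p \<eta> c :: real
  assumes "0 < p" "p < 1" "0 < c" "c < \<eta>"
  shows "c * ln (f p (2 - \<eta> / c))
    = \<eta> * ln \<eta> - c * ln c + c * ln p + (\<eta> - c) * ln (1 - p) - (\<eta> - c) * ln (\<eta> - c)"
proof -
  define t where "t = \<eta> / c"
  have t: "1 < t" "\<eta> = c * t" "\<eta> - c = c * (t - 1)"
    using assms by (auto simp: t_def field_simps)
  have "f p (2 - t) = t powr t * p * (1 - p) powr (t - 1) * (t - 1) powr (1 - t)"
    using t by (simp add: f_def)
  then have "c * ln (f p (2 - t)) = c * (t * ln t + ln p + (t - 1) * ln (1 - p) + (1 - t) * ln (t - 1))"
    using t assms by (simp add: ln_mult ln_powr)
  moreover have "ln \<eta> = ln c + ln t" "ln (\<eta> - c) = ln c + ln (t - 1)"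
    using t assms by (simp_all add: ln_mult)
  ultimately show ?thesis
    unfolding t_def[symmetric] using t by (simp add: algebra_simps)
qed

lemma mult_ln_f_le:
  fixes p \<eta> c s :: real
  assumes "0 < p" "p < 1" "0 < c" "c < \<eta>" "0 < s"
  shows "c * ln (f p (2 - \<eta> / c))
    \<le> c * (1 + ln (p * \<eta> * s / (1 - p)) - ln c) + \<eta> * (s - 1 + ln ((1 - p) / s))"
proof -
  have tangent: "(\<eta> - c) * (ln \<eta> + ln s) + (\<eta> - c) - \<eta> * s \<le> (\<eta> - c) * ln (\<eta> - c)"
    using assms mult_ln_tangent[of "\<eta> - c" "\<eta> * s"] by (simp add: ln_mult)
  have ln_eqs: "ln (p * \<eta> * s / (1 - p)) = ln p + ln \<eta> + ln s - ln (1 - p)"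
    "ln ((1 - p) / s) = ln (1 - p) - ln s"
    using assms by (simp_all add: ln_mult ln_div)
  show ?thesis
    unfolding mult_ln_f_eq[OF assms(1-4)] ln_eqs using tangent by (simp add: algebra_simps)
qed

lemma Upsilon_ln_f_le:
  fixes p \<eta> c s :: real
  assumes "0 < p" "p < 1" "0 < c" "c < \<eta>" "0 < s" "1 \<le> p * \<eta> * s / (1 - p)"
  shows "- c * Upsilon (1 / c) + c * ln (f p (2 - \<eta> / c))
    \<le> 2 * sqrt (p * \<eta> * s / (1 - p)) - 1 + \<eta> * (s - 1 + ln ((1 - p) / s))"
  using mult_ln_f_le[OF assms(1-5)] Upsilon_entropy_le_two_sqrt[OF assms(6,3)]
  by linarith

lemma Upsilon_ln_f_less_large_p:
  fixes p \<eta> c :: real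
  assumes "1/3 \<le> p" "p < 1" "0 < c" "c < \<eta>" "4 * (1 + p + p^2/2) \<le> p * \<eta>"
  shows "- c * Upsilon (1 / c) + c * ln (f p (2 - \<eta> / c)) < - (15/100) * p * \<eta> - 1"
proof -
  have "1/9 \<le> p^2" using assms power_mono[of "1/3" p 2] by (simp add: power2_eq_square)
  moreover have "4 + 4 * p + 2 * p^2 \<le> p * \<eta>" using assms(5) by (simp add: algebra_simps)
  ultimately have L: "50/9 \<le> p * \<eta>" using assms by linarith
  have "- c * Upsilon (1 / c) + c * ln (f p (2 - \<eta> / c)) \<le> 2 * sqrt (p * \<eta>) - 1 - p * \<eta>"
    using Upsilon_ln_f_le[of p c \<eta> "1 - p"] assms L
    by (simp add: mult.commute)
  moreover have "2 * sqrt (p * \<eta>) < 85/100 * (p * \<eta>)"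
    using L by (intro two_sqrt_less_mult) (auto simp: power2_eq_square)
  ultimately show ?thesis by linarith
qed

lemma Upsilon_ln_f_less_small_p:
  fixes p \<eta> c :: real
  assumes "0 < p" "p \<le> 1/3" "0 < c" "c < \<eta>" "4 * (1 + p + p^2/2) \<le> p * \<eta>"
  shows "- c * Upsilon (1 / c) + c * ln (f p (2 - \<eta> / c)) < \<eta> * (1 - p) * ln (1 - p^3) - 1"
proof -
  define q where "q = 1 + p/2 - p^2"
  define K where "K = p * \<eta> / (1 - p)"
  have "0 < q" using assms power_mono[of p "1/3" 2] by (simp add: q_def power2_eq_square)
  have "4 + 4 * p + 2 * p^2 \<le> p * \<eta>" using assms(5) by (simp add: algebra_simps)
  then have "4 \<le> p * \<eta>" using assms zero_le_power2[of p] by linarith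
  moreover have "p * \<eta> \<le> K" using assms by (simp add: K_def field_simps)
  ultimately have K: "1 \<le> K" by linarith
  have "- c * Upsilon (1 / c) + c * ln (f p (2 - \<eta> / c)) \<le> 2 * sqrt K - 1 + \<eta> * ln (1 - p)"
    using Upsilon_ln_f_le[of p c \<eta> 1] assms K
    by (simp add: K_def)
  moreover have "\<eta> * (p * q) \<le> \<eta> * ((1 - p) * ln (1 - p^3) - ln (1 - p))"
    using assms poly_le_ln_one_minus_cube_gap[of p] by (intro mult_left_mono) (auto simp: q_def)
  moreover have "2 * sqrt K < (q * (1 - p)) * K"
  proof (rule two_sqrt_less_mult)
    have "4 < 4 * (q^2 * (1 - p) * (1 + p + p^2/2))"
      using one_less_poly_product[OF assms(1,2)] by (simp add: q_def)
    also have "\<dots> = (q^2 * (1 - p)) * (4 * (1 + p + p^2/2))"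
      by (simp only: ac_simps)
    also have "\<dots> \<le> (q^2 * (1 - p)) * (p * \<eta>)"
      using assms by (intro mult_left_mono) auto
    also have "\<dots> = (q * (1 - p))^2 * K"
      using assms by (simp add: K_def power2_eq_square)
    finally show "4 < (q * (1 - p))^2 * K" .
  qed (use \<open>0 < q\<close> assms K in auto)
  moreover have "(q * (1 - p)) * K = \<eta> * (p * q)"
    using assms by (simp add: K_def)
  ultimately show ?thesis by (simp add: algebra_simps)
qed

theorem lemma8:
  fixes p \<eta> c :: real
  assumes "0 < p" "p < 1" "0 < \<eta>" "0 < c"
    and "\<eta> \<ge> 4 * exp p / p" and "c \<le> p * \<eta>"
  shows "- c * Upsilon (1 / c) + c * ln (f p (2 - \<eta> / c))
         < max (\<eta> * (1 - p) * ln (1 - p ^ 3)) (- (15 / 100) * p * \<eta>) - 1"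
proof -
  have "p * \<eta> < \<eta>" using assms by simp
  with assms(6) have "c < \<eta>" by linarith
  have "4 * (1 + p + p^2/2) \<le> 4 * exp p"
    using assms exp_lower_Taylor_quadratic[of p] by simp
  also have "\<dots> \<le> p * \<eta>" using assms by (simp add: field_simps)
  finally have L: "4 * (1 + p + p^2/2) \<le> p * \<eta>" .
  show ?thesis
  proof (cases "1/3 \<le> p")
    case True
    then show ?thesis
      using Upsilon_ln_f_less_large_p[OF True assms(2,4) \<open>c < \<eta>\<close> L]
      by linarith
  next
    case False
    then show ?thesis
      using Upsilon_ln_f_less_small_p[OF assms(1) _ assms(4) \<open>c < \<eta>\<close> L]
      by linarith
  qed
qed

end
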